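(* Let $\{p,q\}\subset[1,\infty]$ with $q<p$, and let $(\mathcal B_n)_{n\in\mathbb N_0}$ be $\sigma$-subfields with $D(\mathcal B_n,\mathcal B_0)\to0$. Then $\|\mathbb P_{\mathcal B_n}-\mathbb P_{\mathcal B_0}\|_{L^p\to L^q}\to0$. Consequently, for $q<p$, operator-norm convergence $L^p\to L^q$ is equivalent to convergence in the Hausdorff distance $D$.
   Context: Let $(\Omega,\mathcal F,\mathbb P)$ be a (not necessarily complete) probability space and $\mathcal N:=\{F\in\mathcal F:\mathbb P(F)=0\}$. A $\sigma$-subfield is a sub-$\sigma$-field $\mathcal A\subset\mathcal F$ with $\mathcal A=\sigma(\mathcal A\cup\mathcal N)$. For a $\sigma$-subfield $\mathcal A$, $\mathbb P_{\mathcal A}f:=\mathbb E^{\mathbb P}[f\mid\mathcal A]$, viewed as a bounded linear operator from the real normed space $L^p(\mathbb P)$ to $L^q(\mathbb P)$; $\|\cdot\|_{L^p\to L^q}$ is the operator norm. For $\sigma$-subfields $\mathcal A,\mathcal B$, $\rho(\mathcal A,\mathcal B):=\sup_{A\in\mathcal A}\inf_{B\in\mathcal B}\mathbb P(A\triangle B)$ and $D(\mathcal A,\mathcal B):=\rho(\mathcal A,\mathcal B)+\rho(\mathcal B,\mathcal A)$. *)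

theory Defs
  imports "HOL-Probability.Probability"
begin

definition sigma_subfield :: "'a measure \<Rightarrow> 'a set set \<Rightarrow> bool" where
  "sigma_subfield M A \<longleftrightarrow> A \<subseteq> sets M \<and> A = sigma_sets (space M) (A \<union> null_sets M)"

definition cond_exp :: "'a measure \<Rightarrow> 'a set set \<Rightarrow> ('a \<Rightarrow> real) \<Rightarrow> ('a \<Rightarrow> real)" where
  "cond_exp M A f = real_cond_exp M (sigma (space M) A) f"

definition lp_norm :: "'a measure \<Rightarrow> ennreal \<Rightarrow> ('a \<Rightarrow> real) \<Rightarrow> ennreal" where
  "lp_norm M p f =
     (if p = \<infinity> then esssup M (\<lambda>x. ennreal \<bar>f x\<bar>)
      else (let I = (\<integral>\<^sup>+ x. ennreal (\<bar>f x\<bar> powr enn2real p) \<partial>M)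
            in if I = \<infinity> then \<infinity> else ennreal (enn2real I powr (1 / enn2real p))))"

definition cond_exp_diff_opnorm ::
  "'a measure \<Rightarrow> ennreal \<Rightarrow> ennreal \<Rightarrow> 'a set set \<Rightarrow> 'a set set \<Rightarrow> ennreal" where
  "cond_exp_diff_opnorm M p q A B =
     (SUP f \<in> {f \<in> borel_measurable M. lp_norm M p f \<le> 1}.
        lp_norm M q (\<lambda>x. cond_exp M A f x - cond_exp M B f x))"

definition rho :: "'a measure \<Rightarrow> 'a set set \<Rightarrow> 'a set set \<Rightarrow> ennreal" where
  "rho M A B = (SUP X \<in> A. INF Y \<in> B. emeasure M ((X - Y) \<union> (Y - X)))"

definition hausdorff_D :: "'a measure \<Rightarrow> 'a set set \<Rightarrow> 'a set set \<Rightarrow> ennreal" where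
  "hausdorff_D M A B = rho M A B + rho M B A"

end

theory Submission
  imports Defs
begin

(*
  If every set of A is delta-close in measure to a set of B, then every A-measurable function g with
  values in [-1, 1] is within 3 delta in L1 of a B-measurable one: round g to the grid (1/N)Z and
  replace each of its level sets by a close set of B.  Hence, for |f| <= 1, P_A f and P_B f are
  O(delta)-close in L1: P_A f - P_B (P_A f) is at most twice the distance of P_A f to the
  B-measurable functions, and P_B (f - P_A f) is bounded by duality, since I - P_A is self-adjoint
  and the test function sgn (P_B (f - P_A f)) is itself 6 delta-close to its A-conditional
  expectation.  For bounded f the L1 bound interpolates to L^q, and since q < p, truncating a
  function of the unit ball of L^p at height K costs only K^(q - p) in L^q.
  Conversely, for X in A the set {P_B 1_X >= 1/2} lies in B and differs from X only where
  |P_A 1_X - P_B 1_X| >= 1/2, so by Markov's inequality rho(A, B) <= (2 ||P_A - P_B||)^q.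
*)

lemma convex_on_nonneg_powr:
  fixes a b t r :: real
  assumes "r \<ge> 1" "a \<ge> 0" "b \<ge> 0" "0 \<le> t" "t \<le> 1"
  shows "((1 - t) * a + t * b) powr r \<le> (1 - t) * a powr r + t * b powr r"
proof -
  have scale: "(v * c) powr r \<le> v * c powr r" if "0 \<le> v" "v \<le> 1" "c \<ge> 0" for v c :: real
  proof -
    have "(v * c) powr r = v powr r * c powr r" using that by (simp add: powr_mult)
    also have "\<dots> \<le> v powr 1 * c powr r" using that assms(1) by (intro mult_right_mono powr_mono') auto
    finally show ?thesis using that by simp
  qed
  consider "a > 0" "b > 0" | "a = 0" | "b = 0" using assms by linarith
  then show ?thesis
  proof cases
    case 1
    then show ?thesis using convex_onD[OF powr_convex[OF assms(1)], of t a b] assms by simp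
  next
    case 2
    then show ?thesis using scale[of t b] assms by simp
  next
    case 3
    then show ?thesis using scale[of "1 - t" a] assms by simp
  qed
qed

lemma convex_on_abs_powr:
  assumes "r \<ge> 1"
  shows "convex_on UNIV (\<lambda>x::real. \<bar>x\<bar> powr r)"
proof (rule convex_onI)
  fix t x y :: real assume t: "0 < t" "t < 1"
  have "\<bar>(1 - t) *\<^sub>R x + t *\<^sub>R y\<bar> powr r \<le> ((1 - t) * \<bar>x\<bar> + t * \<bar>y\<bar>) powr r"
    using t assms by (intro powr_mono2) (auto simp: abs_mult intro: order.trans[OF abs_triangle_ineq])
  also have "\<dots> \<le> (1 - t) * \<bar>x\<bar> powr r + t * \<bar>y\<bar> powr r"
    using t assms by (intro convex_on_nonneg_powr) auto
  finally show "\<bar>(1 - t) *\<^sub>R x + t *\<^sub>R y\<bar> powr r \<le> (1 - t) * \<bar>x\<bar> powr r + t * \<bar>y\<bar> powr r" .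
qed simp

lemma powr_le_powr_minus_one_mult:
  fixes t c r :: real
  assumes "0 \<le> t" "t \<le> c" "1 \<le> r"
  shows "t powr r \<le> c powr (r - 1) * t"
proof -
  have "t powr r = t powr (r - 1) * t"
    using powr_add[of t "r - 1" 1] assms(1) by simp
  also have "\<dots> \<le> c powr (r - 1) * t" using assms by (simp add: mult_right_mono powr_mono2)
  finally show ?thesis .
qed

lemma exists_powr_less:
  fixes a c :: real
  assumes "a < 0" "0 < c"
  obtains K where "0 < K" "K powr a < c"
proof -
  have "((\<lambda>K. K powr a) \<longlongrightarrow> 0) at_top"
    using assms(1) by (intro tendsto_neg_powr filterlim_ident)
  then have "\<forall>\<^sub>F K in at_top. K powr a < c" using assms(2) by (rule order_tendstoD(2))
  then show ?thesis
    using that eventually_happens'[OF _ eventually_conj[OF eventually_gt_at_top[of 0]]] by force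
qed

lemma powr_inverse_le_iff:
  fixes x c r :: real
  assumes "0 \<le> x" "0 \<le> c" "0 < r"
  shows "x powr (1 / r) \<le> c \<longleftrightarrow> x \<le> c powr r"
proof
  assume "x powr (1 / r) \<le> c"
  then have "(x powr (1 / r)) powr r \<le> c powr r" using assms by (intro powr_mono2) auto
  then show "x \<le> c powr r" using assms by (simp add: powr_powr)
next
  assume "x \<le> c powr r"
  then have "x powr (1 / r) \<le> (c powr r) powr (1 / r)" using assms by (intro powr_mono2) auto
  then show "x powr (1 / r) \<le> c" using assms by (simp add: powr_powr)
qed

lemma powr_abs_sum3_le:
  fixes a b c r :: real
  assumes "0 \<le> r"
  shows "\<bar>a + b + c\<bar> powr r \<le> 3 powr r * (\<bar>a\<bar> powr r + \<bar>b\<bar> powr r + \<bar>c\<bar> powr r)"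
proof -
  define m where "m = max \<bar>a\<bar> (max \<bar>b\<bar> \<bar>c\<bar>)"
  have "\<bar>a + b + c\<bar> powr r \<le> (3 * m) powr r"
    unfolding m_def using assms by (intro powr_mono2) auto
  also have "\<dots> = 3 powr r * m powr r" unfolding m_def by (simp add: powr_mult)
  also have "m powr r \<le> \<bar>a\<bar> powr r + \<bar>b\<bar> powr r + \<bar>c\<bar> powr r"
    unfolding m_def by (auto simp: max_def)
  finally show ?thesis by simp
qed

lemma rounding_error_le_powr:
  fixes b r :: real
  assumes "0 < r"
  shows "of_bool (P \<noteq> (1/2 \<le> b)) \<le> (2 * \<bar>of_bool P - b\<bar>) powr r"
proof (cases "P \<longleftrightarrow> 1/2 \<le> b")
  case False
  then have "1 \<le> 2 * \<bar>of_bool P - b\<bar>" by (cases P) auto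
  then show ?thesis using False assms by (simp add: ge_one_powr_ge_zero)
qed simp

section \<open>Quantisation along level sets\<close>

text \<open>For the level sets L i = {g \<ge> -1 + i/N} of a function g with values in [-1, 1],
  staircase N L rounds g down to the grid (1/N)\<int>.\<close>
definition staircase :: "nat \<Rightarrow> (nat \<Rightarrow> 'a set) \<Rightarrow> 'a \<Rightarrow> real" where
  "staircase N L x = -1 + (\<Sum>i\<in>{1..2*N}. indicator (L i) x) / real N"

lemma staircase_approximation:
  fixes x :: real and N :: nat
  assumes "N > 0" and "\<bar>x\<bar> \<le> 1"
  shows "\<bar>x - staircase N (\<lambda>i. {y. -1 + real i / real N \<le> y}) x\<bar> \<le> 1 / real N"
proof -
  define m where "m = nat \<lfloor>real N * (x + 1)\<rfloor>"
  have N: "real N > 0" using assms by simp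
  have nonneg: "0 \<le> real N * (x + 1)" using assms N by simp
  have m_le: "real m \<le> real N * (x + 1)" and m_gt: "real N * (x + 1) < real m + 1"
    unfolding m_def using nonneg by linarith+
  have "real N * (x + 1) \<le> real (2 * N)" using assms N by simp
  then have "m \<le> 2 * N" using m_le by linarith
  have level_iff: "-1 + real i / real N \<le> x \<longleftrightarrow> i \<le> m" for i
  proof -
    have "-1 + real i / real N \<le> x \<longleftrightarrow> real i \<le> real N * (x + 1)"
      using N by (simp add: field_simps)
    also have "\<dots> \<longleftrightarrow> i \<le> m"
      unfolding m_def using nonneg by (simp add: le_nat_iff le_floor_iff)
    finally show ?thesis .
  qed
  have "(\<Sum>i\<in>{1..2*N}. indicator {y. -1 + real i / real N \<le> y} x :: real)
      = (\<Sum>i\<in>{1..2*N}. of_bool (i \<le> m))"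
    unfolding indicator_def mem_Collect_eq level_iff ..
  also have "\<dots> = card ({1..2*N} \<inter> {i. i \<le> m})" by simp
  also have "{1..2*N} \<inter> {i. i \<le> m} = {1..m}" using \<open>m \<le> 2 * N\<close> by auto
  finally have "staircase N (\<lambda>i. {y. -1 + real i / real N \<le> y}) x = -1 + real m / real N"
    by (simp add: staircase_def)
  moreover have "x - (-1 + real m / real N) = (real N * (x + 1) - real m) / real N"
    using N by (simp add: field_simps)
  moreover have "0 \<le> (real N * (x + 1) - real m) / real N"
    using m_le N by simp
  moreover have "(real N * (x + 1) - real m) / real N \<le> 1 / real N"
    using m_gt N by (simp add: divide_right_mono)
  ultimately show ?thesis by simp
qed

lemma abs_staircase_le_1:
  assumes "N > 0"
  shows "\<bar>staircase N L x\<bar> \<le> 1"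
proof -
  have "(\<Sum>i\<in>{1..2*N}. indicator (L i) x) \<le> (\<Sum>i\<in>{1..2*N}. 1 :: real)"
    by (rule sum_mono) (simp add: indicator_def)
  then have "(\<Sum>i\<in>{1..2*N}. indicator (L i) x) / real N \<le> 2" using assms by (simp add: field_simps)
  moreover have "0 \<le> (\<Sum>i\<in>{1..2*N}. indicator (L i) x :: real) / real N" by (simp add: sum_nonneg)
  ultimately show ?thesis unfolding staircase_def by linarith
qed

lemma abs_staircase_diff_le:
  assumes "N > 0"
  shows "\<bar>staircase N L x - staircase N Y x\<bar>
           \<le> (\<Sum>i\<in>{1..2*N}. indicator ((L i - Y i) \<union> (Y i - L i)) x) / real N"
proof -
  have "staircase N L x - staircase N Y x
      = (\<Sum>i\<in>{1..2*N}. indicator (L i) x - indicator (Y i) x) / real N"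
    unfolding staircase_def by (simp add: sum_subtractf diff_divide_distrib)
  then have "\<bar>staircase N L x - staircase N Y x\<bar>
      = \<bar>\<Sum>i\<in>{1..2*N}. indicator (L i) x - indicator (Y i) x\<bar> / real N"
    using assms by simp
  also have "\<dots> \<le> (\<Sum>i\<in>{1..2*N}. \<bar>indicator (L i) x - indicator (Y i) x\<bar>) / real N"
    using assms by (simp add: divide_right_mono sum_abs)
  also have "(\<Sum>i\<in>{1..2*N}. \<bar>indicator (L i) x - indicator (Y i) x\<bar>)
      = (\<Sum>i\<in>{1..2*N}. indicator ((L i - Y i) \<union> (Y i - L i)) x :: real)"
    by (rule sum.cong) (auto simp: indicator_def)
  finally show ?thesis .
qed

lemma borel_measurable_staircase:
  assumes "\<And>i. L i \<in> sets M"
  shows "staircase N L \<in> borel_measurable M"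
proof -
  have [measurable]: "L i \<in> sets M" for i by (rule assms)
  show ?thesis unfolding staircase_def by measurable
qed

lemma (in finite_measure) integrable_staircase:
  assumes "\<And>i. L i \<in> sets M"
  shows "integrable M (staircase N L)"
  unfolding staircase_def using assms
  by (intro Bochner_Integration.integrable_add integrable_divide integrable_sum integrable_real_indicator)
    (auto simp: emeasure_eq_measure)

lemma (in finite_measure) integral_abs_staircase_diff_le:
  assumes N: "N > 0" and L: "\<And>i. L i \<in> sets M" and Y: "\<And>i. Y i \<in> sets M"
    and close: "\<And>i. measure M ((L i - Y i) \<union> (Y i - L i)) \<le> \<delta>"
  shows "(\<integral>x. \<bar>staircase N L x - staircase N Y x\<bar> \<partial>M) \<le> 2 * \<delta>"
proof -
  have D: "(L i - Y i) \<union> (Y i - L i) \<in> sets M" for i using L Y by blast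
  have "(\<integral>x. \<bar>staircase N L x - staircase N Y x\<bar> \<partial>M)
      \<le> (\<integral>x. (\<Sum>i\<in>{1..2*N}. indicator ((L i - Y i) \<union> (Y i - L i)) x) / real N \<partial>M)"
    using abs_staircase_diff_le[OF N] D integrable_staircase[OF L] integrable_staircase[OF Y]
    by (intro integral_mono) (auto simp: emeasure_eq_measure)
  also have "\<dots> = (\<Sum>i\<in>{1..2*N}. measure M ((L i - Y i) \<union> (Y i - L i))) / real N"
    using D by (simp add: emeasure_eq_measure)
  also have "\<dots> \<le> (\<Sum>i\<in>{1..2*N}. \<delta>) / real N"
    using close by (intro divide_right_mono sum_mono) auto
  also have "\<dots> = 2 * \<delta>" using N by simp
  finally show ?thesis .
qed

lemma sigma_subfield_subset_sets: "sigma_subfield M A \<Longrightarrow> A \<subseteq> sets M"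
  by (simp add: sigma_subfield_def)

lemma sigma_algebra_sigma_subfield:
  assumes "sigma_subfield M A"
  shows "sigma_algebra (space M) A"
proof -
  have "A \<union> null_sets M \<subseteq> Pow (space M)"
    using sigma_subfield_subset_sets[OF assms] null_setsD2 sets.space_closed by blast
  then have "sigma_algebra (space M) (sigma_sets (space M) (A \<union> null_sets M))"
    by (rule sigma_algebra_sigma_sets)
  moreover have "sigma_sets (space M) (A \<union> null_sets M) = A"
    using assms by (simp add: sigma_subfield_def)
  ultimately show ?thesis by simp
qed

lemma sets_sigma_subfield:
  assumes "sigma_subfield M A"
  shows "sets (sigma (space M) A) = A"
proof -
  interpret sigma_algebra "space M" A by (rule sigma_algebra_sigma_subfield[OF assms])
  show ?thesis using space_closed by (simp add: sigma_sets_eq)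
qed

lemma subalgebra_sigma_subfield:
  assumes "sigma_subfield M A"
  shows "subalgebra M (sigma (space M) A)"
  using sigma_subfield_subset_sets[OF assms] sets_sigma_subfield[OF assms]
  by (simp add: subalgebra_def space_measure_of_conv)

lemma borel_measurable_sigma_subfield:
  assumes "sigma_subfield M A" "f \<in> borel_measurable (sigma (space M) A)"
  shows "f \<in> borel_measurable M"
  using measurable_from_subalg[OF subalgebra_sigma_subfield] assms by blast

lemma sigma_subfield_ge_set:
  fixes f :: "'a \<Rightarrow> real"
  assumes "sigma_subfield M A" "f \<in> borel_measurable (sigma (space M) A)"
  shows "{x\<in>space M. c \<le> f x} \<in> A"
  using assms(2)[unfolded borel_measurable_iff_ge] sets_sigma_subfield[OF assms(1)]
  by (simp add: space_measure_of_conv)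

lemma (in finite_measure) finite_measure_subalgebra_sigma_subfield:
  assumes "sigma_subfield M A"
  shows "finite_measure_subalgebra M (sigma (space M) A)"
  using subalgebra_sigma_subfield[OF assms] finite_measure_axioms
  by (simp add: finite_measure_subalgebra_def finite_measure_subalgebra_axioms_def)

lemma rho_lessD:
  assumes "rho M A B < c" "X \<in> A"
  shows "\<exists>Y\<in>B. emeasure M ((X - Y) \<union> (Y - X)) < c"
proof -
  have "(INF Y\<in>B. emeasure M ((X - Y) \<union> (Y - X))) < c"
    using assms unfolding rho_def by (meson SUP_upper le_less_trans)
  then show ?thesis by (simp add: INF_less_iff)
qed

lemma rho_less_imp_pos: "rho M A B < ennreal \<delta> \<Longrightarrow> 0 < \<delta>"
  using le_less_trans[OF zero_le, of "rho M A B" "ennreal \<delta>"] by simp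

lemma integral_abs_diff_triangle_ineq:
  fixes f g h :: "'a \<Rightarrow> real"
  assumes "integrable M f" "integrable M g" "integrable M h"
  shows "(\<integral>x. \<bar>f x - h x\<bar> \<partial>M) \<le> (\<integral>x. \<bar>f x - g x\<bar> \<partial>M) + (\<integral>x. \<bar>g x - h x\<bar> \<partial>M)"
proof -
  have "(\<integral>x. \<bar>f x - h x\<bar> \<partial>M) \<le> (\<integral>x. \<bar>f x - g x\<bar> + \<bar>g x - h x\<bar> \<partial>M)"
    using assms by (intro integral_mono) auto
  also have "\<dots> = (\<integral>x. \<bar>f x - g x\<bar> \<partial>M) + (\<integral>x. \<bar>g x - h x\<bar> \<partial>M)"
    using assms by (intro Bochner_Integration.integral_add) auto
  finally show ?thesis .
qed

lemma integrable_bounded_mult: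
  fixes f g :: "'a \<Rightarrow> real"
  assumes "integrable M f" "g \<in> borel_measurable M" "AE x in M. \<bar>g x\<bar> \<le> c"
  shows "integrable M (\<lambda>x. g x * f x)"
proof (rule Bochner_Integration.integrable_bound)
  show "integrable M (\<lambda>x. c * f x)" using assms(1) by simp
  show "AE x in M. norm (g x * f x) \<le> norm (c * f x)"
    using assms(3) by eventually_elim (auto simp: abs_mult intro: mult_right_mono)
qed (use assms in auto)

lemma integral_mult_le_integral_abs:
  fixes a f :: "'a \<Rightarrow> real"
  assumes a: "integrable M a" and f: "f \<in> borel_measurable M" and f_bound: "AE x in M. \<bar>f x\<bar> \<le> 1"
  shows "(\<integral>x. a x * f x \<partial>M) \<le> (\<integral>x. \<bar>a x\<bar> \<partial>M)"
proof (rule integral_mono_AE)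
  show "integrable M (\<lambda>x. a x * f x)"
    using integrable_bounded_mult[OF a f f_bound] by (simp add: mult.commute)
  show "AE x in M. a x * f x \<le> \<bar>a x\<bar>"
    using f_bound
  proof eventually_elim
    case (elim x)
    have "a x * f x \<le> \<bar>a x\<bar> * \<bar>f x\<bar>" by (metis abs_ge_self abs_mult)
    also have "\<dots> \<le> \<bar>a x\<bar>" using elim by (simp add: mult_left_le)
    finally show ?case .
  qed
qed (use a in simp)

lemma nn_integral_abs_powr_add3_le:
  fixes a b c :: "'a \<Rightarrow> real"
  assumes r: "0 \<le> r"
    and meas: "a \<in> borel_measurable M" "b \<in> borel_measurable M" "c \<in> borel_measurable M"
    and a: "(\<integral>\<^sup>+x. \<bar>a x\<bar> powr r \<partial>M) \<le> ennreal \<alpha>" and "0 \<le> \<alpha>"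
    and b: "(\<integral>\<^sup>+x. \<bar>b x\<bar> powr r \<partial>M) \<le> ennreal \<beta>" and "0 \<le> \<beta>"
    and c: "(\<integral>\<^sup>+x. \<bar>c x\<bar> powr r \<partial>M) \<le> ennreal \<gamma>" and "0 \<le> \<gamma>"
  shows "(\<integral>\<^sup>+x. \<bar>a x + b x + c x\<bar> powr r \<partial>M) \<le> ennreal (3 powr r * (\<alpha> + \<beta> + \<gamma>))"
proof -
  have "(\<integral>\<^sup>+x. \<bar>a x + b x + c x\<bar> powr r \<partial>M)
      \<le> (\<integral>\<^sup>+x. ennreal (3 powr r) * (\<bar>a x\<bar> powr r + \<bar>b x\<bar> powr r + \<bar>c x\<bar> powr r) \<partial>M)"
    using powr_abs_sum3_le[OF r]
    by (intro nn_integral_mono) (simp add: ennreal_mult[symmetric] ennreal_plus[symmetric] ennreal_leI del: ennreal_plus)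
  also have "\<dots> = ennreal (3 powr r) * ((\<integral>\<^sup>+x. \<bar>a x\<bar> powr r \<partial>M) + (\<integral>\<^sup>+x. \<bar>b x\<bar> powr r \<partial>M) + (\<integral>\<^sup>+x. \<bar>c x\<bar> powr r \<partial>M))"
    using meas by (simp add: nn_integral_cmult nn_integral_add)
  also have "\<dots> \<le> ennreal (3 powr r) * (ennreal \<alpha> + ennreal \<beta> + ennreal \<gamma>)"
    using a b c by (intro mult_left_mono add_mono) auto
  also have "\<dots> = ennreal (3 powr r * (\<alpha> + \<beta> + \<gamma>))"
    using \<open>0 \<le> \<alpha>\<close> \<open>0 \<le> \<beta>\<close> \<open>0 \<le> \<gamma>\<close> by (simp add: ennreal_mult ennreal_plus)
  finally show ?thesis .
qed

lemma lp_norm_le_iff: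
  assumes "0 < r" "0 < c"
  shows "lp_norm M (ennreal r) f \<le> ennreal c \<longleftrightarrow> (\<integral>\<^sup>+x. \<bar>f x\<bar> powr r \<partial>M) \<le> ennreal (c powr r)"
proof (cases "(\<integral>\<^sup>+x. \<bar>f x\<bar> powr r \<partial>M) = \<infinity>")
  case True
  then show ?thesis using assms by (simp add: lp_norm_def top_unique)
next
  case False
  then have "lp_norm M (ennreal r) f = ennreal (enn2real (\<integral>\<^sup>+x. \<bar>f x\<bar> powr r \<partial>M) powr (1 / r))"
    using assms by (simp add: lp_norm_def)
  then show ?thesis
    using False assms by (simp add: powr_inverse_le_iff less_top)
qed

lemma AE_abs_le_of_lp_norm_top:
  assumes "lp_norm M \<infinity> f \<le> 1"
  shows "AE x in M. \<bar>f x\<bar> \<le> 1"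
proof -
  have esssup: "esssup M (\<lambda>x. ennreal \<bar>f x\<bar>) \<le> 1" using assms by (simp add: lp_norm_def)
  show ?thesis
    using esssup_AE[of "\<lambda>x. ennreal \<bar>f x\<bar>" M] by eventually_elim (metis esssup ennreal_le_1 order.trans)
qed

lemma nn_integral_powr_truncation_le:
  fixes f :: "'a \<Rightarrow> real"
  assumes f: "f \<in> borel_measurable M" and K: "0 < K" and r: "0 \<le> r" "r \<le> P"
  shows "(\<integral>\<^sup>+x. \<bar>f x - max (- K) (min K (f x))\<bar> powr r \<partial>M)
           \<le> ennreal (K powr (r - P)) * (\<integral>\<^sup>+x. \<bar>f x\<bar> powr P \<partial>M)"
proof -
  have tail: "\<bar>f x - max (- K) (min K (f x))\<bar> powr r \<le> K powr (r - P) * \<bar>f x\<bar> powr P" for x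
  proof (cases "\<bar>f x\<bar> \<le> K")
    case True
    then show ?thesis by simp
  next
    case False
    have "\<bar>f x - max (- K) (min K (f x))\<bar> powr r \<le> \<bar>f x\<bar> powr r"
      using K r by (intro powr_mono2) auto
    also have "\<dots> = \<bar>f x\<bar> powr (r - P) * \<bar>f x\<bar> powr P" by (simp add: powr_add[symmetric])
    also have "\<dots> \<le> K powr (r - P) * \<bar>f x\<bar> powr P"
      using False K r by (intro mult_right_mono powr_mono2') auto
    finally show ?thesis .
  qed
  have "(\<integral>\<^sup>+x. \<bar>f x - max (- K) (min K (f x))\<bar> powr r \<partial>M)
      \<le> (\<integral>\<^sup>+x. ennreal (K powr (r - P)) * \<bar>f x\<bar> powr P \<partial>M)"
    using tail by (intro nn_integral_mono) (simp add: ennreal_mult[symmetric] ennreal_leI)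
  also have "\<dots> = ennreal (K powr (r - P)) * (\<integral>\<^sup>+x. \<bar>f x\<bar> powr P \<partial>M)"
    using f by (intro nn_integral_cmult) measurable
  finally show ?thesis .
qed

lemma (in finite_measure) integrable_of_nn_integral_powr:
  fixes f :: "'a \<Rightarrow> real"
  assumes f: "f \<in> borel_measurable M" and P: "1 \<le> P" and fin: "(\<integral>\<^sup>+x. \<bar>f x\<bar> powr P \<partial>M) < \<infinity>"
  shows "integrable M f"
proof (rule integrableI_bounded)
  have pointwise: "\<bar>f x\<bar> \<le> 1 + \<bar>f x\<bar> powr P" for x
  proof (cases "\<bar>f x\<bar> \<le> 1")
    case False
    then have "\<bar>f x\<bar> powr 1 \<le> \<bar>f x\<bar> powr P" using P by (intro powr_mono) auto
    then show ?thesis by simp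
  qed (simp add: add_increasing2)
  have "(\<integral>\<^sup>+x. norm (f x) \<partial>M) \<le> (\<integral>\<^sup>+x. ennreal (1 + \<bar>f x\<bar> powr P) \<partial>M)"
    by (intro nn_integral_mono ennreal_leI) (simp add: pointwise)
  also have "\<dots> = emeasure M (space M) + (\<integral>\<^sup>+x. \<bar>f x\<bar> powr P \<partial>M)"
    using f by (simp add: ennreal_plus nn_integral_add)
  also have "\<dots> < \<infinity>" using fin by (simp add: less_top[symmetric])
  finally show "(\<integral>\<^sup>+x. norm (f x) \<partial>M) < \<infinity>" .
qed (rule f)

lemma cond_exp_diff_opnorm_commute:
  "cond_exp_diff_opnorm M p q A B = cond_exp_diff_opnorm M p q B A"
  unfolding cond_exp_diff_opnorm_def lp_norm_def by (simp add: abs_minus_commute)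

section \<open>Conditional expectations onto sigma-subfields\<close>

context finite_measure
begin

lemma borel_measurable_cond_exp_sigma_subfield:
  assumes "sigma_subfield M A"
  shows "cond_exp M A f \<in> borel_measurable (sigma (space M) A)"
    and "cond_exp M A f \<in> borel_measurable M"
proof -
  interpret finite_measure_subalgebra M "sigma (space M) A"
    by (rule finite_measure_subalgebra_sigma_subfield[OF assms])
  show "cond_exp M A f \<in> borel_measurable (sigma (space M) A)"
    and "cond_exp M A f \<in> borel_measurable M" unfolding cond_exp_def by simp_all
qed

lemma integrable_cond_exp:
  assumes "sigma_subfield M A" "integrable M f"
  shows "integrable M (cond_exp M A f)"
proof -
  interpret finite_measure_subalgebra M "sigma (space M) A"
    by (rule finite_measure_subalgebra_sigma_subfield[OF assms(1)])
  show ?thesis unfolding cond_exp_def using assms(2) by (rule real_cond_exp_int(1))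
qed

lemma AE_abs_cond_exp_le:
  assumes A: "sigma_subfield M A"
    and f: "f \<in> borel_measurable M" and bound: "AE x in M. \<bar>f x\<bar> \<le> c"
  shows "AE x in M. \<bar>cond_exp M A f x\<bar> \<le> c"
proof -
  interpret finite_measure_subalgebra M "sigma (space M) A"
    by (rule finite_measure_subalgebra_sigma_subfield[OF A])
  have fi: "integrable M f" using f bound by (intro integrable_const_bound) auto
  have "AE x in M. real_cond_exp M (sigma (space M) A) f x \<le> c"
    by (rule real_cond_exp_le_c[OF fi]) (use bound in auto)
  moreover have "AE x in M. real_cond_exp M (sigma (space M) A) f x \<ge> - c"
    by (rule real_cond_exp_ge_c[OF fi]) (use bound in auto)
  ultimately show ?thesis unfolding cond_exp_def by auto
qed

lemma integral_mult_cond_exp_commute: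
  assumes A: "sigma_subfield M A" and f: "integrable M f"
    and k: "k \<in> borel_measurable M" and k_bound: "AE x in M. \<bar>k x\<bar> \<le> c"
  shows "(\<integral>x. k x * cond_exp M A f x \<partial>M) = (\<integral>x. cond_exp M A k x * f x \<partial>M)"
proof -
  interpret finite_measure_subalgebra M "sigma (space M) A"
    by (rule finite_measure_subalgebra_sigma_subfield[OF A])
  let ?E = "real_cond_exp M (sigma (space M) A)"
  have Ek_bound: "AE x in M. \<bar>?E k x\<bar> \<le> c"
    using AE_abs_cond_exp_le[OF A k k_bound] unfolding cond_exp_def .
  have "(\<integral>x. ?E k x * f x \<partial>M) = (\<integral>x. ?E k x * ?E f x \<partial>M)"
    by (rule real_cond_exp_intg(2)[symmetric]) (use integrable_bounded_mult[OF f _ Ek_bound] f in auto)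
  also have "\<dots> = (\<integral>x. ?E f x * k x \<partial>M)"
    by (subst mult.commute, rule real_cond_exp_intg(2))
      (use integrable_bounded_mult[OF real_cond_exp_int(1)[OF f] k k_bound] k in \<open>auto simp: mult.commute\<close>)
  finally show ?thesis unfolding cond_exp_def by (simp add: mult.commute)
qed

lemma integral_mult_sub_cond_exp:
  assumes A: "sigma_subfield M A" and f: "integrable M f"
    and k: "k \<in> borel_measurable M" and k_bound: "AE x in M. \<bar>k x\<bar> \<le> c"
  shows "(\<integral>x. k x * (f x - cond_exp M A f x) \<partial>M) = (\<integral>x. (k x - cond_exp M A k x) * f x \<partial>M)"
proof -
  have kf: "integrable M (\<lambda>x. k x * f x)"
    by (rule integrable_bounded_mult[OF f k k_bound])
  have kEf: "integrable M (\<lambda>x. k x * cond_exp M A f x)"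
    by (rule integrable_bounded_mult[OF integrable_cond_exp[OF A f] k k_bound])
  have Ekf: "integrable M (\<lambda>x. cond_exp M A k x * f x)"
    by (rule integrable_bounded_mult[OF f borel_measurable_cond_exp_sigma_subfield(2)[OF A]
          AE_abs_cond_exp_le[OF A k k_bound]])
  have "(\<integral>x. k x * (f x - cond_exp M A f x) \<partial>M)
      = (\<integral>x. k x * f x \<partial>M) - (\<integral>x. k x * cond_exp M A f x \<partial>M)"
    using kf kEf by (simp add: right_diff_distrib)
  also have "\<dots> = (\<integral>x. k x * f x \<partial>M) - (\<integral>x. cond_exp M A k x * f x \<partial>M)"
    by (simp add: integral_mult_cond_exp_commute[OF A f k k_bound])
  also have "\<dots> = (\<integral>x. (k x - cond_exp M A k x) * f x \<partial>M)"
    using kf Ekf by (simp add: left_diff_distrib)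
  finally show ?thesis .
qed

lemma integral_abs_cond_exp_residual_le:
  assumes A: "sigma_subfield M A" and B: "sigma_subfield M B"
    and f: "f \<in> borel_measurable M" and f_bound: "AE x in M. \<bar>f x\<bar> \<le> 1"
  obtains k where "k \<in> borel_measurable (sigma (space M) B)" "\<And>x. \<bar>k x\<bar> \<le> 1"
    and "(\<integral>x. \<bar>cond_exp M B (\<lambda>x. f x - cond_exp M A f x) x\<bar> \<partial>M)
           \<le> (\<integral>x. \<bar>k x - cond_exp M A k x\<bar> \<partial>M)"
proof -
  interpret SB: finite_measure_subalgebra M "sigma (space M) B"
    by (rule finite_measure_subalgebra_sigma_subfield[OF B])
  let ?EA = "cond_exp M A" and ?u = "\<lambda>x. f x - cond_exp M A f x"
  have f_int: "integrable M f" using f f_bound by (intro integrable_const_bound) auto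
  have u_int: "integrable M ?u" using f_int integrable_cond_exp[OF A f_int] by simp
  define k where "k x = sgn (cond_exp M B ?u x)" for x
  have k: "k \<in> borel_measurable (sigma (space M) B)"
    unfolding k_def using borel_measurable_cond_exp_sigma_subfield(1)[OF B] by measurable
  then have kM: "k \<in> borel_measurable M" by (rule borel_measurable_sigma_subfield[OF B])
  have k_bound: "\<bar>k x\<bar> \<le> 1" for x by (simp add: k_def abs_sgn_eq)
  have k_int: "integrable M k" using kM k_bound by (intro integrable_const_bound) auto
  have "(\<integral>x. \<bar>cond_exp M B ?u x\<bar> \<partial>M) = (\<integral>x. k x * cond_exp M B ?u x \<partial>M)"
    by (rule Bochner_Integration.integral_cong) (auto simp: k_def sgn_real_def)
  also have "\<dots> = (\<integral>x. k x * ?u x \<partial>M)"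
  proof -
    have "integrable M (\<lambda>x. k x * ?u x)"
      using integrable_bounded_mult[OF u_int kM, of 1] k_bound by simp
    then show ?thesis
      unfolding cond_exp_def[of M B] using borel_measurable_integrable[OF u_int]
      by (intro SB.real_cond_exp_intg(2) k)
  qed
  also have "\<dots> = (\<integral>x. (k x - ?EA k x) * f x \<partial>M)"
    using k_bound by (intro integral_mult_sub_cond_exp[OF A f_int kM]) auto
  also have "\<dots> \<le> (\<integral>x. \<bar>k x - ?EA k x\<bar> \<partial>M)"
    using k_int integrable_cond_exp[OF A k_int] by (intro integral_mult_le_integral_abs f f_bound) auto
  finally show ?thesis using that k k_bound by blast
qed

lemma AE_abs_powr_cond_exp_le:
  assumes A: "sigma_subfield M A" and r: "r \<ge> 1"
    and f: "integrable M f" and f_powr: "integrable M (\<lambda>x. \<bar>f x\<bar> powr r)"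
  shows "AE x in M. \<bar>cond_exp M A f x\<bar> powr r \<le> cond_exp M A (\<lambda>x. \<bar>f x\<bar> powr r) x"
proof -
  interpret finite_measure_subalgebra M "sigma (space M) A"
    by (rule finite_measure_subalgebra_sigma_subfield[OF A])
  show ?thesis unfolding cond_exp_def
    by (rule real_cond_exp_jensens_inequality(2)[OF f _ _ f_powr convex_on_abs_powr[OF r]]) auto
qed

lemma nn_integral_abs_powr_cond_exp_le:
  assumes A: "sigma_subfield M A" and r: "r \<ge> 1"
    and f: "integrable M f" and f_powr: "integrable M (\<lambda>x. \<bar>f x\<bar> powr r)"
  shows "(\<integral>\<^sup>+x. \<bar>cond_exp M A f x\<bar> powr r \<partial>M) \<le> (\<integral>\<^sup>+x. \<bar>f x\<bar> powr r \<partial>M)"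
proof -
  interpret finite_measure_subalgebra M "sigma (space M) A"
    by (rule finite_measure_subalgebra_sigma_subfield[OF A])
  let ?g = "\<lambda>x. \<bar>f x\<bar> powr r"
  have "(\<integral>\<^sup>+x. \<bar>cond_exp M A f x\<bar> powr r \<partial>M) \<le> (\<integral>\<^sup>+x. cond_exp M A ?g x \<partial>M)"
    using AE_abs_powr_cond_exp_le[OF A r f f_powr] by (intro nn_integral_mono_AE) (auto simp: ennreal_leI)
  also have "\<dots> = (\<integral>x. cond_exp M A ?g x \<partial>M)"
    unfolding cond_exp_def using real_cond_exp_pos[of ?g] f_powr
    by (intro nn_integral_eq_integral real_cond_exp_int(1)) auto
  also have "\<dots> = (\<integral>x. ?g x \<partial>M)"
    unfolding cond_exp_def using real_cond_exp_int(2)[OF f_powr] by simp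
  also have "\<dots> = (\<integral>\<^sup>+x. ?g x \<partial>M)"
    using f_powr by (intro nn_integral_eq_integral[symmetric]) auto
  finally show ?thesis .
qed

lemma nn_integral_abs_powr_cond_exp_tail_le:
  assumes A: "sigma_subfield M A" and r: "1 \<le> r" "r \<le> P" and K: "0 < K"
    and f: "f \<in> borel_measurable M" and f_norm: "(\<integral>\<^sup>+x. \<bar>f x\<bar> powr P \<partial>M) \<le> 1"
  shows "(\<integral>\<^sup>+x. \<bar>cond_exp M A (\<lambda>x. f x - max (- K) (min K (f x))) x\<bar> powr r \<partial>M)
           \<le> ennreal (K powr (r - P))"
proof -
  define g where "g x = f x - max (- K) (min K (f x))" for x
  have "integrable M f"
    using f_norm r by (intro integrable_of_nn_integral_powr[OF f, of P]) (auto simp: less_top[symmetric] top_unique)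
  moreover have "integrable M (\<lambda>x. max (- K) (min K (f x)))"
    using f K by (intro integrable_const_bound[where B=K]) (auto intro!: AE_I2)
  ultimately have g_int: "integrable M g" unfolding g_def by simp
  have "(\<integral>\<^sup>+x. \<bar>g x\<bar> powr r \<partial>M) \<le> ennreal (K powr (r - P)) * (\<integral>\<^sup>+x. \<bar>f x\<bar> powr P \<partial>M)"
    unfolding g_def using r by (intro nn_integral_powr_truncation_le[OF f K]) auto
  also have "\<dots> \<le> ennreal (K powr (r - P))"
    using mult_left_mono[OF f_norm, of "ennreal (K powr (r - P))"] by simp
  finally have g_norm: "(\<integral>\<^sup>+x. \<bar>g x\<bar> powr r \<partial>M) \<le> ennreal (K powr (r - P))" .
  then have "integrable M (\<lambda>x. \<bar>g x\<bar> powr r)"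
    using g_int by (intro integrableI_bounded) (auto simp: le_less_trans)
  with g_norm show ?thesis
    unfolding g_def[symmetric] using nn_integral_abs_powr_cond_exp_le[OF A r(1) g_int] by (auto intro: order.trans)
qed

lemma integral_abs_cond_exp_le:
  assumes A: "sigma_subfield M A" and f: "integrable M f"
  shows "(\<integral>x. \<bar>cond_exp M A f x\<bar> \<partial>M) \<le> (\<integral>x. \<bar>f x\<bar> \<partial>M)"
proof -
  have f_abs: "integrable M (\<lambda>x. \<bar>f x\<bar> powr 1)" using f by simp
  have "(\<integral>x. \<bar>cond_exp M A f x\<bar> \<partial>M) \<le> (\<integral>x. cond_exp M A (\<lambda>x. \<bar>f x\<bar> powr 1) x \<partial>M)"
    using AE_abs_powr_cond_exp_le[OF A order.refl f f_abs]
      integrable_abs[OF integrable_cond_exp[OF A f]] integrable_cond_exp[OF A f_abs]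
    by (intro integral_mono_AE) auto
  also have "\<dots> = (\<integral>x. \<bar>f x\<bar> \<partial>M)"
  proof -
    interpret finite_measure_subalgebra M "sigma (space M) A"
      by (rule finite_measure_subalgebra_sigma_subfield[OF A])
    show ?thesis unfolding cond_exp_def using real_cond_exp_int(2)[OF f_abs] by simp
  qed
  finally show ?thesis .
qed

lemma integral_abs_sub_cond_exp_le:
  assumes A: "sigma_subfield M A" and v: "integrable M v"
    and h: "h \<in> borel_measurable (sigma (space M) A)" "integrable M h"
  shows "(\<integral>x. \<bar>v x - cond_exp M A v x\<bar> \<partial>M) \<le> 2 * (\<integral>x. \<bar>v x - h x\<bar> \<partial>M)"
proof -
  interpret finite_measure_subalgebra M "sigma (space M) A"
    by (rule finite_measure_subalgebra_sigma_subfield[OF A])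
  define w where "w x = v x - h x" for x
  have w: "integrable M w" unfolding w_def using v h by simp
  have Ew: "integrable M (cond_exp M A w)" by (rule integrable_cond_exp[OF A w])
  have "AE x in M. v x - cond_exp M A v x = w x - cond_exp M A w x"
    using real_cond_exp_F_meas[OF h(2,1)] real_cond_exp_diff[OF v h(2)]
    unfolding w_def cond_exp_def by auto
  then have "(\<integral>x. \<bar>v x - cond_exp M A v x\<bar> \<partial>M) = (\<integral>x. \<bar>w x - cond_exp M A w x\<bar> \<partial>M)"
    using v w Ew integrable_cond_exp[OF A v] by (intro integral_cong_AE) auto
  also have "\<dots> \<le> (\<integral>x. \<bar>w x\<bar> \<partial>M) + (\<integral>x. \<bar>cond_exp M A w x\<bar> \<partial>M)"
    using integral_abs_diff_triangle_ineq[OF w _ Ew, of "\<lambda>_. 0"] by simp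
  also have "\<dots> \<le> 2 * (\<integral>x. \<bar>w x\<bar> \<partial>M)"
    using integral_abs_cond_exp_le[OF A w] by simp
  finally show ?thesis unfolding w_def .
qed

end

section \<open>Close sigma-subfields have close conditional expectations\<close>

context prob_space
begin

lemma approximation_by_sigma_subfield:
  assumes A: "sigma_subfield M A" and B: "sigma_subfield M B" and AB: "rho M A B < ennreal \<delta>"
    and g: "g \<in> borel_measurable (sigma (space M) A)" and g_bound: "AE x in M. \<bar>g x\<bar> \<le> 1"
  shows "\<exists>h \<in> borel_measurable (sigma (space M) B).
           (\<forall>x. \<bar>h x\<bar> \<le> 1) \<and> (\<integral>x. \<bar>g x - h x\<bar> \<partial>M) \<le> 3 * \<delta>"
proof -
  have \<delta>: "\<delta> > 0" by (rule rho_less_imp_pos[OF AB])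
  obtain N :: nat where N_large: "1 / \<delta> < real N" using reals_Archimedean2 by blast
  have N: "N > 0" using N_large \<delta> by (metis divide_pos_pos less_trans of_nat_0_less_iff zero_less_one)
  have N_\<delta>: "1 / real N \<le> \<delta>" using N_large \<delta> N by (simp add: field_simps)
  define L where "L i = {x\<in>space M. -1 + real i / real N \<le> g x}" for i :: nat
  have L: "L i \<in> A" for i unfolding L_def by (rule sigma_subfield_ge_set[OF A g])
  then have "\<forall>i. \<exists>Y\<in>B. emeasure M ((L i - Y) \<union> (Y - L i)) < ennreal \<delta>"
    using rho_lessD[OF AB] by blast
  then obtain Y where Y: "\<And>i. Y i \<in> B"
    and Y_close: "\<And>i. emeasure M ((L i - Y i) \<union> (Y i - L i)) < ennreal \<delta>"
    by metis
  have L_sets: "L i \<in> sets M" and Y_sets: "Y i \<in> sets M" for i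
    using L Y sigma_subfield_subset_sets[OF A] sigma_subfield_subset_sets[OF B] by blast+
  have h: "staircase N Y \<in> borel_measurable (sigma (space M) B)"
    by (rule borel_measurable_staircase) (use Y sets_sigma_subfield[OF B] in simp)
  have L_int: "integrable M (staircase N L)" and Y_int: "integrable M (staircase N Y)"
    by (rule integrable_staircase, rule L_sets, rule integrable_staircase, rule Y_sets)
  have g_int: "integrable M g"
    using g_bound borel_measurable_sigma_subfield[OF A g] by (intro integrable_const_bound) auto
  have "AE x in M. \<bar>g x - staircase N L x\<bar> \<le> 1 / real N"
    using g_bound AE_space
  proof eventually_elim
    case (elim x)
    then have "staircase N L x = staircase N (\<lambda>i. {y. -1 + real i / real N \<le> y}) (g x)"
      by (simp add: staircase_def L_def indicator_def)
    then show ?case using staircase_approximation[OF N, of "g x"] elim by simp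
  qed
  then have "(\<integral>x. \<bar>g x - staircase N L x\<bar> \<partial>M) \<le> 1 / real N"
    using g_int L_int by (intro integral_le_const) auto
  moreover have "(\<integral>x. \<bar>staircase N L x - staircase N Y x\<bar> \<partial>M) \<le> 2 * \<delta>"
    using Y_close \<delta> L_sets Y_sets
    by (intro integral_abs_staircase_diff_le[OF N]) (auto simp: emeasure_eq_measure ennreal_less_iff less_imp_le)
  ultimately have "(\<integral>x. \<bar>g x - staircase N Y x\<bar> \<partial>M) \<le> 3 * \<delta>"
    using integral_abs_diff_triangle_ineq[OF g_int L_int Y_int] N_\<delta> by linarith
  then show ?thesis by (intro bexI[OF _ h] conjI allI abs_staircase_le_1[OF N])
qed

lemma integral_abs_sub_cond_exp_le_rho:
  assumes A: "sigma_subfield M A" and B: "sigma_subfield M B" and AB: "rho M A B < ennreal \<delta>"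
    and g: "g \<in> borel_measurable (sigma (space M) A)" and g_bound: "AE x in M. \<bar>g x\<bar> \<le> 1"
  shows "(\<integral>x. \<bar>g x - cond_exp M B g x\<bar> \<partial>M) \<le> 6 * \<delta>"
proof -
  obtain h where h: "h \<in> borel_measurable (sigma (space M) B)" "\<forall>x. \<bar>h x\<bar> \<le> 1"
    and g_h: "(\<integral>x. \<bar>g x - h x\<bar> \<partial>M) \<le> 3 * \<delta>"
    using approximation_by_sigma_subfield[OF A B AB g g_bound] by blast
  have "integrable M g"
    using borel_measurable_sigma_subfield[OF A g] g_bound by (intro integrable_const_bound) auto
  moreover have "integrable M h"
    using borel_measurable_sigma_subfield[OF B h(1)] h(2) by (intro integrable_const_bound) auto
  ultimately show ?thesis
    using integral_abs_sub_cond_exp_le[OF B _ h(1)] g_h by fastforce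
qed

lemma integral_abs_cond_exp_diff_le:
  assumes A: "sigma_subfield M A" and B: "sigma_subfield M B"
    and AB: "rho M A B < ennreal \<delta>" and BA: "rho M B A < ennreal \<delta>"
    and f: "f \<in> borel_measurable M" and f_bound: "AE x in M. \<bar>f x\<bar> \<le> 1"
  shows "(\<integral>x. \<bar>cond_exp M A f x - cond_exp M B f x\<bar> \<partial>M) \<le> 12 * \<delta>"
proof -
  note [measurable] =
    borel_measurable_cond_exp_sigma_subfield[OF A] borel_measurable_cond_exp_sigma_subfield[OF B]
  interpret SB: finite_measure_subalgebra M "sigma (space M) B"
    by (rule finite_measure_subalgebra_sigma_subfield[OF B])
  let ?EA = "cond_exp M A" and ?EB = "cond_exp M B" and ?u = "\<lambda>x. f x - cond_exp M A f x"
  have f_int: "integrable M f" using f f_bound by (intro integrable_const_bound) auto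
  have EAf_int: "integrable M (?EA f)" by (rule integrable_cond_exp[OF A f_int])
  have close: "(\<integral>x. \<bar>?EA f x - ?EB (?EA f) x\<bar> \<partial>M) \<le> 6 * \<delta>"
    by (rule integral_abs_sub_cond_exp_le_rho[OF A B AB _ AE_abs_cond_exp_le[OF A f f_bound]]) simp
  obtain k where k: "k \<in> borel_measurable (sigma (space M) B)" "\<And>x. \<bar>k x\<bar> \<le> 1"
    and dual: "(\<integral>x. \<bar>?EB ?u x\<bar> \<partial>M) \<le> (\<integral>x. \<bar>k x - ?EA k x\<bar> \<partial>M)"
    using integral_abs_cond_exp_residual_le[OF A B f f_bound] by blast
  have "(\<integral>x. \<bar>k x - ?EA k x\<bar> \<partial>M) \<le> 6 * \<delta>"
    using k by (intro integral_abs_sub_cond_exp_le_rho[OF B A BA]) auto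
  moreover have "AE x in M. ?EB (?EA f) x - ?EB f x = - ?EB ?u x"
    using SB.real_cond_exp_diff[OF f_int EAf_int] unfolding cond_exp_def by auto
  then have "(\<integral>x. \<bar>?EB (?EA f) x - ?EB f x\<bar> \<partial>M) = (\<integral>x. \<bar>?EB ?u x\<bar> \<partial>M)"
    by (intro integral_cong_AE) auto
  ultimately show ?thesis
    using integral_abs_diff_triangle_ineq[OF EAf_int integrable_cond_exp[OF B EAf_int]
        integrable_cond_exp[OF B f_int]] close dual
    by linarith
qed

lemma nn_integral_cond_exp_diff_bounded_le:
  assumes A: "sigma_subfield M A" and B: "sigma_subfield M B"
    and AB: "rho M A B < ennreal \<delta>" and BA: "rho M B A < ennreal \<delta>"
    and r: "r \<ge> 1" and K: "K > 0"
    and f: "f \<in> borel_measurable M" and f_bound: "AE x in M. \<bar>f x\<bar> \<le> K"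
  shows "(\<integral>\<^sup>+x. \<bar>cond_exp M A f x - cond_exp M B f x\<bar> powr r \<partial>M)
           \<le> ennreal ((2 * K) powr (r - 1) * (12 * K * \<delta>))"
proof -
  note [measurable] =
    borel_measurable_cond_exp_sigma_subfield[OF A] borel_measurable_cond_exp_sigma_subfield[OF B]
  interpret SA: finite_measure_subalgebra M "sigma (space M) A"
    by (rule finite_measure_subalgebra_sigma_subfield[OF A])
  interpret SB: finite_measure_subalgebra M "sigma (space M) B"
    by (rule finite_measure_subalgebra_sigma_subfield[OF B])
  define d where "d x = cond_exp M A f x - cond_exp M B f x" for x
  have fi: "integrable M f" using f f_bound by (intro integrable_const_bound) auto
  have d_int: "integrable M d"
    unfolding d_def using integrable_cond_exp[OF A fi] integrable_cond_exp[OF B fi] by simp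
  have "AE x in M. \<bar>f x / K\<bar> \<le> 1" using f_bound by eventually_elim (use K in \<open>simp add: abs_div\<close>)
  then have "(\<integral>x. \<bar>cond_exp M A (\<lambda>x. f x / K) x - cond_exp M B (\<lambda>x. f x / K) x\<bar> \<partial>M) \<le> 12 * \<delta>"
    using f by (intro integral_abs_cond_exp_diff_le[OF A B AB BA]) auto
  moreover have "AE x in M. cond_exp M A (\<lambda>x. f x / K) x - cond_exp M B (\<lambda>x. f x / K) x = d x / K"
    using SA.real_cond_exp_cdiv[OF fi, of K] SB.real_cond_exp_cdiv[OF fi, of K]
    unfolding d_def cond_exp_def by eventually_elim (simp add: diff_divide_distrib)
  then have "(\<integral>x. \<bar>cond_exp M A (\<lambda>x. f x / K) x - cond_exp M B (\<lambda>x. f x / K) x\<bar> \<partial>M)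
      = (\<integral>x. \<bar>d x\<bar> / K \<partial>M)"
    using K unfolding d_def by (intro integral_cong_AE) (auto simp: abs_div)
  ultimately have "(\<integral>x. \<bar>d x\<bar> / K \<partial>M) \<le> 12 * \<delta>" by simp
  then have d_L1: "(\<integral>x. \<bar>d x\<bar> \<partial>M) \<le> 12 * K * \<delta>"
    using K by (simp add: field_simps)
  have "AE x in M. \<bar>d x\<bar> \<le> 2 * K"
    using AE_abs_cond_exp_le[OF A f f_bound] AE_abs_cond_exp_le[OF B f f_bound]
    unfolding d_def by eventually_elim linarith
  then have "(\<integral>\<^sup>+x. \<bar>d x\<bar> powr r \<partial>M) \<le> (\<integral>\<^sup>+x. (2 * K) powr (r - 1) * \<bar>d x\<bar> \<partial>M)"
    by (intro nn_integral_mono_AE) (auto intro!: ennreal_leI powr_le_powr_minus_one_mult r)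
  also have "\<dots> = ennreal ((2 * K) powr (r - 1) * (\<integral>x. \<bar>d x\<bar> \<partial>M))"
    using d_int by (subst nn_integral_eq_integral) auto
  also have "\<dots> \<le> ennreal ((2 * K) powr (r - 1) * (12 * K * \<delta>))"
    using d_L1 by (intro ennreal_leI mult_left_mono) auto
  finally show ?thesis unfolding d_def .
qed

lemma nn_integral_cond_exp_diff_truncated_le:
  assumes A: "sigma_subfield M A" and B: "sigma_subfield M B"
    and AB: "rho M A B < ennreal \<delta>" and BA: "rho M B A < ennreal \<delta>"
    and r: "1 \<le> r" "r < P" and K: "0 < K"
    and f: "f \<in> borel_measurable M" and f_norm: "(\<integral>\<^sup>+x. \<bar>f x\<bar> powr P \<partial>M) \<le> 1"
  shows "(\<integral>\<^sup>+x. \<bar>cond_exp M A f x - cond_exp M B f x\<bar> powr r \<partial>M)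
           \<le> ennreal (3 powr r * ((2 * K) powr (r - 1) * (12 * K * \<delta>) + K powr (r - P) + K powr (r - P)))"
proof -
  interpret SA: finite_measure_subalgebra M "sigma (space M) A"
    by (rule finite_measure_subalgebra_sigma_subfield[OF A])
  interpret SB: finite_measure_subalgebra M "sigma (space M) B"
    by (rule finite_measure_subalgebra_sigma_subfield[OF B])
  let ?EA = "cond_exp M A" and ?EB = "cond_exp M B"
  define f1 where "f1 x = max (- K) (min K (f x))" for x
  define f2 where "f2 x = f x - f1 x" for x
  have f1_meas: "f1 \<in> borel_measurable M" unfolding f1_def using f by measurable
  have f1_int: "integrable M f1"
    using f1_meas K by (intro integrable_const_bound[where B=K]) (auto simp: f1_def intro!: AE_I2)
  have "integrable M f"
    using f_norm r by (intro integrable_of_nn_integral_powr[OF f, of P]) (auto simp: less_top[symmetric] top_unique)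
  then have f2_int: "integrable M f2" unfolding f2_def using f1_int by simp
  have "AE x in M. ?EA f x - ?EB f x = (?EA f1 x - ?EB f1 x) + ?EA f2 x + - ?EB f2 x"
    using SA.real_cond_exp_add[OF f1_int f2_int] SB.real_cond_exp_add[OF f1_int f2_int]
    unfolding cond_exp_def f2_def by auto
  then have "(\<integral>\<^sup>+x. \<bar>?EA f x - ?EB f x\<bar> powr r \<partial>M)
      = (\<integral>\<^sup>+x. \<bar>(?EA f1 x - ?EB f1 x) + ?EA f2 x + - ?EB f2 x\<bar> powr r \<partial>M)"
    by (intro nn_integral_cong_AE) auto
  also have "\<dots> \<le> ennreal (3 powr r * ((2 * K) powr (r - 1) * (12 * K * \<delta>) + K powr (r - P) + K powr (r - P)))"
  proof (rule nn_integral_abs_powr_add3_le)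
    show "(\<integral>\<^sup>+x. \<bar>?EA f1 x - ?EB f1 x\<bar> powr r \<partial>M) \<le> ennreal ((2 * K) powr (r - 1) * (12 * K * \<delta>))"
      using K by (intro nn_integral_cond_exp_diff_bounded_le[OF A B AB BA r(1) K f1_meas]) (auto simp: f1_def)
    show "(\<integral>\<^sup>+x. \<bar>?EA f2 x\<bar> powr r \<partial>M) \<le> ennreal (K powr (r - P))"
      "(\<integral>\<^sup>+x. \<bar>- ?EB f2 x\<bar> powr r \<partial>M) \<le> ennreal (K powr (r - P))"
      unfolding f2_def f1_def abs_minus_cancel using r
      by (intro nn_integral_abs_powr_cond_exp_tail_le A B K f f_norm; simp)+
  qed (use r K rho_less_imp_pos[OF AB] borel_measurable_cond_exp_sigma_subfield(2)[OF A]
      borel_measurable_cond_exp_sigma_subfield(2)[OF B] in auto)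
  finally show ?thesis .
qed

lemma nn_integral_cond_exp_diff_le_uniform:
  assumes r: "1 \<le> r" "ennreal r < p" and \<epsilon>: "0 < \<epsilon>"
  obtains \<delta> where "0 < \<delta>"
    and "\<And>A B f. sigma_subfield M A \<Longrightarrow> sigma_subfield M B
           \<Longrightarrow> rho M A B < ennreal \<delta> \<Longrightarrow> rho M B A < ennreal \<delta>
           \<Longrightarrow> f \<in> borel_measurable M \<Longrightarrow> lp_norm M p f \<le> 1
           \<Longrightarrow> (\<integral>\<^sup>+x. \<bar>cond_exp M A f x - cond_exp M B f x\<bar> powr r \<partial>M) \<le> ennreal \<epsilon>"
proof (cases "p = \<infinity>")
  case True
  define \<delta> where "\<delta> = \<epsilon> / (2 powr (r - 1) * 12)"
  show ?thesis
  proof (rule that)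
    show "0 < \<delta>" unfolding \<delta>_def using \<epsilon> by simp
    fix A B f assume A: "sigma_subfield M A" and B: "sigma_subfield M B"
      and AB: "rho M A B < ennreal \<delta>" and BA: "rho M B A < ennreal \<delta>"
      and f: "f \<in> borel_measurable M" and f_norm: "lp_norm M p f \<le> 1"
    have "AE x in M. \<bar>f x\<bar> \<le> 1" using f_norm True by (intro AE_abs_le_of_lp_norm_top) simp
    from nn_integral_cond_exp_diff_bounded_le[OF A B AB BA r(1) _ f this]
    show "(\<integral>\<^sup>+x. \<bar>cond_exp M A f x - cond_exp M B f x\<bar> powr r \<partial>M) \<le> ennreal \<epsilon>"
      unfolding \<delta>_def by simp
  qed
next
  case False
  define P where "P = enn2real p"
  have p: "p = ennreal P" unfolding P_def using False by (simp add: less_top)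
  have "r < P" using r unfolding p by (simp add: ennreal_less_iff)
  obtain K where K: "0 < K" and "K powr (r - P) < \<epsilon> / (4 * 3 powr r)"
    using exists_powr_less[of "r - P" "\<epsilon> / (4 * 3 powr r)"] \<open>r < P\<close> \<epsilon> by auto
  then have tail: "3 powr r * (2 * K powr (r - P)) < \<epsilon> / 2" by (simp add: field_simps)
  define \<delta> where "\<delta> = \<epsilon> / 2 / (3 powr r * ((2 * K) powr (r - 1) * 12 * K))"
  show ?thesis
  proof (rule that)
    show "0 < \<delta>" unfolding \<delta>_def using \<epsilon> K by simp
    fix A B f assume A: "sigma_subfield M A" and B: "sigma_subfield M B"
      and AB: "rho M A B < ennreal \<delta>" and BA: "rho M B A < ennreal \<delta>"
      and f: "f \<in> borel_measurable M" and f_norm: "lp_norm M p f \<le> 1"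
    have "(\<integral>\<^sup>+x. \<bar>f x\<bar> powr P \<partial>M) \<le> 1"
      using f_norm \<open>r < P\<close> r(1) lp_norm_le_iff[of P 1 M f] unfolding p by simp
    from nn_integral_cond_exp_diff_truncated_le[OF A B AB BA r(1) \<open>r < P\<close> K f this]
    show "(\<integral>\<^sup>+x. \<bar>cond_exp M A f x - cond_exp M B f x\<bar> powr r \<partial>M) \<le> ennreal \<epsilon>"
      using tail K unfolding \<delta>_def by (auto simp: field_simps elim!: order.trans intro!: ennreal_leI)
  qed
qed

lemma cond_exp_diff_opnorm_le_uniform:
  assumes q: "1 \<le> q" "q < p" and \<epsilon>: "0 < \<epsilon>"
  obtains \<delta> where "0 < \<delta>"
    and "\<And>A B. sigma_subfield M A \<Longrightarrow> sigma_subfield M B \<Longrightarrow> hausdorff_D M A B < ennreal \<delta>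
           \<Longrightarrow> cond_exp_diff_opnorm M p q A B \<le> ennreal \<epsilon>"
proof -
  define r where "r = enn2real q"
  have q_r: "q = ennreal r"
    unfolding r_def using ennreal_enn2real[OF order.strict_trans2[OF q(2) top_greatest]] by simp
  have "1 \<le> r" using q(1) unfolding q_r by simp
  obtain \<delta> where \<delta>: "0 < \<delta>"
    and small: "\<And>A B f. sigma_subfield M A \<Longrightarrow> sigma_subfield M B
           \<Longrightarrow> rho M A B < ennreal \<delta> \<Longrightarrow> rho M B A < ennreal \<delta>
           \<Longrightarrow> f \<in> borel_measurable M \<Longrightarrow> lp_norm M p f \<le> 1
           \<Longrightarrow> (\<integral>\<^sup>+x. \<bar>cond_exp M A f x - cond_exp M B f x\<bar> powr r \<partial>M) \<le> ennreal (\<epsilon> powr r)"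
    using nn_integral_cond_exp_diff_le_uniform[OF \<open>1 \<le> r\<close> q(2)[unfolded q_r], of "\<epsilon> powr r"] \<epsilon>
    by auto
  show ?thesis
  proof (rule that[OF \<delta>])
    fix A B assume A: "sigma_subfield M A" and B: "sigma_subfield M B"
      and D: "hausdorff_D M A B < ennreal \<delta>"
    have "rho M A B \<le> hausdorff_D M A B" "rho M B A \<le> hausdorff_D M A B"
      unfolding hausdorff_D_def by (auto intro: add_increasing add_increasing2)
    then have "rho M A B < ennreal \<delta>" "rho M B A < ennreal \<delta>"
      using D by auto
    then show "cond_exp_diff_opnorm M p q A B \<le> ennreal \<epsilon>"
      unfolding cond_exp_diff_opnorm_def q_r using \<open>1 \<le> r\<close> \<epsilon> small[OF A B]
      by (intro SUP_least) (auto simp: lp_norm_le_iff)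
  qed
qed

lemma tendsto_cond_exp_diff_opnorm_zero:
  assumes q: "1 \<le> q" "q < p"
    and A: "\<And>n. sigma_subfield M (A n)" and B: "\<And>n. sigma_subfield M (B n)"
    and D: "(\<lambda>n. hausdorff_D M (A n) (B n)) \<longlonglongrightarrow> 0"
  shows "(\<lambda>n. cond_exp_diff_opnorm M p q (A n) (B n)) \<longlonglongrightarrow> 0"
proof (rule tendsto_zero_ennreal)
  fix \<epsilon> :: real assume "0 < \<epsilon>"
  then obtain \<delta> where "0 < \<delta>" and small: "\<And>A B. sigma_subfield M A \<Longrightarrow> sigma_subfield M B
      \<Longrightarrow> hausdorff_D M A B < ennreal \<delta> \<Longrightarrow> cond_exp_diff_opnorm M p q A B \<le> ennreal (\<epsilon> / 2)"
    using cond_exp_diff_opnorm_le_uniform[OF q, of "\<epsilon> / 2"] by auto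
  have "\<forall>\<^sub>F n in sequentially. hausdorff_D M (A n) (B n) < ennreal \<delta>"
    using order_tendstoD(2)[OF D, of "ennreal \<delta>"] \<open>0 < \<delta>\<close> by simp
  then show "\<forall>\<^sub>F n in sequentially. cond_exp_diff_opnorm M p q (A n) (B n) < ennreal \<epsilon>"
  proof eventually_elim
    case (elim n)
    then have "cond_exp_diff_opnorm M p q (A n) (B n) \<le> ennreal (\<epsilon> / 2)"
      by (rule small[OF A B])
    also have "\<dots> < ennreal \<epsilon>" using \<open>0 < \<epsilon>\<close> by (simp add: ennreal_less_iff)
    finally show ?case .
  qed
qed

end

section \<open>Close conditional expectations force close sigma-subfields\<close>

context prob_space
begin

lemma exists_close_set_cond_exp:
  assumes A: "sigma_subfield M A" and B: "sigma_subfield M B" and X: "X \<in> A" and r: "0 < r"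
  obtains Y where "Y \<in> B"
    and "emeasure M ((X - Y) \<union> (Y - X)) \<le> ennreal (2 powr r) *
           (\<integral>\<^sup>+x. \<bar>cond_exp M A (indicator X) x - cond_exp M B (indicator X) x\<bar> powr r \<partial>M)"
proof
  interpret SA: finite_measure_subalgebra M "sigma (space M) A"
    by (rule finite_measure_subalgebra_sigma_subfield[OF A])
  let ?EA = "cond_exp M A (indicator X)" and ?EB = "cond_exp M B (indicator X)"
  define Y where "Y = {x\<in>space M. 1/2 \<le> ?EB x}"
  show Y: "Y \<in> B"
    unfolding Y_def by (rule sigma_subfield_ge_set[OF B borel_measurable_cond_exp_sigma_subfield(1)[OF B]])
  have X_sets: "X \<in> sets M" using X sigma_subfield_subset_sets[OF A] by blast
  have Y_sets: "Y \<in> sets M" using Y sigma_subfield_subset_sets[OF B] by blast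
  have "indicator X \<in> borel_measurable (sigma (space M) A)"
    using X sets_sigma_subfield[OF A] by (intro borel_measurable_indicator) simp
  moreover have "integrable M (indicator X :: 'a \<Rightarrow> real)"
    using X_sets by (intro integrable_real_indicator) (simp_all add: emeasure_eq_measure)
  ultimately have EA: "AE x in M. ?EA x = indicator X x"
    unfolding cond_exp_def by (intro SA.real_cond_exp_F_meas)
  have "emeasure M ((X - Y) \<union> (Y - X)) = (\<integral>\<^sup>+x. indicator ((X - Y) \<union> (Y - X)) x \<partial>M)"
    using X_sets Y_sets by simp
  also have "\<dots> \<le> (\<integral>\<^sup>+x. (2 * \<bar>?EA x - ?EB x\<bar>) powr r \<partial>M)"
  proof (intro nn_integral_mono_AE, use EA AE_space in eventually_elim)
    case (elim x)
    then show ?case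
      using rounding_error_le_powr[OF r, of "x \<in> X" "?EB x"]
      by (auto simp: Y_def indicator_def intro!: ennreal_leI)
  qed
  also have "\<dots> = ennreal (2 powr r) * (\<integral>\<^sup>+x. \<bar>?EA x - ?EB x\<bar> powr r \<partial>M)"
    using borel_measurable_cond_exp_sigma_subfield(2)[OF A] borel_measurable_cond_exp_sigma_subfield(2)[OF B]
    by (subst nn_integral_cmult[symmetric]) (auto simp: powr_mult ennreal_mult)
  finally show "emeasure M ((X - Y) \<union> (Y - X)) \<le> ennreal (2 powr r) *
      (\<integral>\<^sup>+x. \<bar>?EA x - ?EB x\<bar> powr r \<partial>M)" .
qed

lemma lp_norm_indicator_le_1:
  assumes X: "X \<in> sets M" and p: "1 \<le> p"
  shows "lp_norm M p (indicator X) \<le> 1"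
proof (cases "p = \<infinity>")
  case True
  have "esssup M (\<lambda>x. ennreal \<bar>indicator X x :: real\<bar>) \<le> 1"
    using X by (intro esssup_I) (auto simp: indicator_def)
  then show ?thesis using True by (simp add: lp_norm_def)
next
  case False
  define P where "P = enn2real p"
  have p_P: "p = ennreal P" unfolding P_def using False by (simp add: less_top)
  have "(\<integral>\<^sup>+x. \<bar>indicator X x :: real\<bar> powr P \<partial>M) \<le> (\<integral>\<^sup>+x. 1 \<partial>M)"
    by (intro nn_integral_mono) (auto simp: indicator_def)
  then show ?thesis
    using p unfolding p_P by (subst ennreal_1[symmetric], subst lp_norm_le_iff) (auto simp: emeasure_space_1)
qed

lemma rho_le_cond_exp_diff_opnorm:
  assumes A: "sigma_subfield M A" and B: "sigma_subfield M B"
    and p: "1 \<le> p" and r: "0 < r" and \<epsilon>: "0 < \<epsilon>"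
    and opnorm: "cond_exp_diff_opnorm M p (ennreal r) A B \<le> ennreal \<epsilon>"
  shows "rho M A B \<le> ennreal ((2 * \<epsilon>) powr r)"
  unfolding rho_def
proof (rule SUP_least)
  fix X assume X: "X \<in> A"
  then have X_sets: "X \<in> sets M" using sigma_subfield_subset_sets[OF A] by blast
  obtain Y where Y: "Y \<in> B" and close: "emeasure M ((X - Y) \<union> (Y - X)) \<le> ennreal (2 powr r) *
      (\<integral>\<^sup>+x. \<bar>cond_exp M A (indicator X) x - cond_exp M B (indicator X) x\<bar> powr r \<partial>M)"
    using exists_close_set_cond_exp[OF A B X r] by blast
  have "lp_norm M (ennreal r) (\<lambda>x. cond_exp M A (indicator X) x - cond_exp M B (indicator X) x)
      \<le> cond_exp_diff_opnorm M p (ennreal r) A B"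
    unfolding cond_exp_diff_opnorm_def
    using X_sets lp_norm_indicator_le_1[OF X_sets p] by (intro SUP_upper) auto
  then have "(\<integral>\<^sup>+x. \<bar>cond_exp M A (indicator X) x - cond_exp M B (indicator X) x\<bar> powr r \<partial>M)
      \<le> ennreal (\<epsilon> powr r)"
    using opnorm r \<epsilon> by (simp add: lp_norm_le_iff[symmetric])
  with close have "emeasure M ((X - Y) \<union> (Y - X)) \<le> ennreal (2 powr r) * ennreal (\<epsilon> powr r)"
    by (auto elim!: order.trans intro: mult_left_mono)
  also have "\<dots> = ennreal ((2 * \<epsilon>) powr r)" using \<epsilon> by (simp add: powr_mult ennreal_mult)
  finally show "(INF Y\<in>B. emeasure M ((X - Y) \<union> (Y - X))) \<le> ennreal ((2 * \<epsilon>) powr r)"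
    using Y by (intro INF_lower2) auto
qed

lemma hausdorff_D_le_cond_exp_diff_opnorm:
  assumes A: "sigma_subfield M A" and B: "sigma_subfield M B"
    and p: "1 \<le> p" and r: "0 < r" and \<epsilon>: "0 < \<epsilon>"
    and opnorm: "cond_exp_diff_opnorm M p (ennreal r) A B \<le> ennreal \<epsilon>"
  shows "hausdorff_D M A B \<le> ennreal (2 * (2 * \<epsilon>) powr r)"
proof -
  have "hausdorff_D M A B \<le> ennreal ((2 * \<epsilon>) powr r) + ennreal ((2 * \<epsilon>) powr r)"
    unfolding hausdorff_D_def using opnorm cond_exp_diff_opnorm_commute[of M p _ A B]
    by (intro add_mono rho_le_cond_exp_diff_opnorm[OF _ _ p r \<epsilon>] A B) auto
  then show ?thesis by (simp add: ennreal_plus[symmetric] del: ennreal_plus)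
qed

lemma tendsto_hausdorff_D_zero:
  assumes p: "1 \<le> p" and r: "0 < r"
    and A: "\<And>n. sigma_subfield M (A n)" and B: "\<And>n. sigma_subfield M (B n)"
    and opnorm: "(\<lambda>n. cond_exp_diff_opnorm M p (ennreal r) (A n) (B n)) \<longlonglongrightarrow> 0"
  shows "(\<lambda>n. hausdorff_D M (A n) (B n)) \<longlonglongrightarrow> 0"
proof (rule tendsto_zero_ennreal)
  fix e :: real assume e: "0 < e"
  define \<epsilon> where "\<epsilon> = (e / 4) powr (1 / r) / 2"
  have \<epsilon>: "0 < \<epsilon>" and bound: "2 * (2 * \<epsilon>) powr r = e / 2"
    unfolding \<epsilon>_def using e r by (simp_all add: powr_powr)
  have "\<forall>\<^sub>F n in sequentially. cond_exp_diff_opnorm M p (ennreal r) (A n) (B n) < ennreal \<epsilon>"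
    using order_tendstoD(2)[OF opnorm, of "ennreal \<epsilon>"] \<epsilon> by simp
  then show "\<forall>\<^sub>F n in sequentially. hausdorff_D M (A n) (B n) < ennreal e"
  proof eventually_elim
    case (elim n)
    then have "hausdorff_D M (A n) (B n) \<le> ennreal (e / 2)"
      unfolding bound[symmetric] by (intro hausdorff_D_le_cond_exp_diff_opnorm[OF A B p r \<epsilon>]) simp
    also have "\<dots> < ennreal e" using e by (simp add: ennreal_less_iff)
    finally show ?case .
  qed
qed

end

theorem mainTheorem8:
  fixes M :: "'a measure" and p q :: ennreal and B :: "nat \<Rightarrow> 'a set set"
  assumes "prob_space M"
    and "1 \<le> q" and "q < p"
    and "\<And>n. sigma_subfield M (B n)"
  shows "(((\<lambda>n. hausdorff_D M (B n) (B 0)) \<longlonglongrightarrow> 0)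
            \<longrightarrow> ((\<lambda>n. cond_exp_diff_opnorm M p q (B n) (B 0)) \<longlonglongrightarrow> 0))
         \<and> (((\<lambda>n. cond_exp_diff_opnorm M p q (B n) (B 0)) \<longlonglongrightarrow> 0)
            \<longleftrightarrow> ((\<lambda>n. hausdorff_D M (B n) (B 0)) \<longlonglongrightarrow> 0))"
proof -
  interpret prob_space M by fact
  define r where "r = enn2real q"
  have q_r: "q = ennreal r"
    unfolding r_def using ennreal_enn2real[OF order.strict_trans2[OF assms(3) top_greatest]] by simp
  have "1 \<le> p" using assms(2,3) by simp
  moreover have "0 < r" using assms(2) unfolding q_r by simp
  ultimately show ?thesis
    using tendsto_cond_exp_diff_opnorm_zero[OF assms(2,3), where A=B and B="\<lambda>_. B 0"]
      tendsto_hausdorff_D_zero[where A=B and B="\<lambda>_. B 0"] assms(4)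
    unfolding q_r by blast
qed

end
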